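(* Under the utility optimization algorithm described in the context, with initial conditions $Q_a^b(0)=0$ and $E_{[a,c]}(0)=0$, for all nodes $a,b$, all links $l_{[a,c]}\in\mathcal{L}$ and all time slots $t\ge 0$: $$0\le Q_a^b(t)\le \beta V+R_{max},\qquad 0\le E_{[a,c]}(t)\le \theta_{[a,c]}+K_{max}.$$
   Context: Network: a graph $G=(\mathcal{N},\mathcal{L})$ with directed links $l_{[a,c]}$; $\mathcal{N}_a^{in}$ ($\mathcal{N}_a^{out}$) is the set of nodes with a link into (out of) $a$; $d_{max}=\max_a\max(|\mathcal{N}_a^{in}|,|\mathcal{N}_a^{out}|)$. Time is slotted, $t=0,1,2,\dots$. For each link: $K_{[a,c]}\le K_{max}$ is the key generated per slot when QKD is on; $S_{[a,c]}(t)\in\{0,1\}$ the on/off decision; $P_{[a,c]}(t)\in[0,P_{max}]$ the key consumed; $E_{[a,c]}(t)$ the key stored, with $E_{[a,c]}(t+1)=E_{[a,c]}(t)-P_{[a,c]}(t)+S_{[a,c]}(t)K_{[a,c]}$ and the constraint $E_{[a,c]}(t)\ge P_{[a,c]}(t)$. The transmission rate is $\mu_{[a,c]}(t)=\mu_{[a,c]}(P_{[a,c]}(t))\le\mu_{max}$, with a constant $\delta>0$ such that $\mu_{[a,c]}(P)\le\delta P$; it is split as $\mu_{[a,c]}(t)=\sum_b\mu^b_{[a,c]}(t)$ over data types (type-$b$ = destined to $b$). $Q_a^b(t)$ is the type-$b$ queue at $a$, $R_a^b(t)\in[0,R_{max}]$ the admitted new type-$b$ data at $a$, with $Q_a^b(t+1)=Q_a^b(t)+R_a^b(t)+\sum_{c\in\mathcal{N}_a^{in}}\mu^b_{[c,a]}(t)-\sum_{c\in\mathcal{N}_a^{out}}\mu^b_{[a,c]}(t)$.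 Utilities $U_a^b$ are concave nondecreasing; $\beta=\max_{a,b}(U_a^b)'(0)$. $V>0$ is a parameter; $\gamma=R_{max}+d_{max}\mu_{max}$; $\theta_{[a,c]}=\delta\beta V+P_{max}$. Weights: $W^b_{[a,c]}(t)=\max(Q_a^b(t)-Q_c^b(t)-\gamma,0)$, $W_{[a,c]}(t)=\max_bW^b_{[a,c]}(t)$. Algorithm, each slot $t$: (1) set $S_{[a,c]}(t)=1$ if $E_{[a,c]}(t)<\theta_{[a,c]}$, else $0$; (2) choose $R_a^b(t)\in[0,R_{max}]$ maximizing $VU_a^b(R)-Q_a^b(t)R$; (3) choose $\vec P(t)$ maximizing $\sum_{l_{[a,c]}\in\mathcal{L}}\{\mu_{[a,c]}(P_{[a,c]})W_{[a,c]}(t)+(E_{[a,c]}(t)-\theta_{[a,c]})P_{[a,c]}\}$ subject to $E_{[a,c]}(t)\ge P_{[a,c]}$; (4) pick $b^*\in\arg\max_bW^b_{[a,c]}(t)$ and, if $W^{b^*}_{[a,c]}(t)>0$, set $\mu^{b^*}_{[a,c]}(t)=\mu_{[a,c]}(t)$ (all other types get zero on that link); (5) update queues and key storage by the dynamics above. *)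

theory Defs
  imports "HOL-Analysis.Analysis"
begin

definition in_nbrs :: "'n set \<Rightarrow> ('n \<times> 'n) set \<Rightarrow> 'n \<Rightarrow> 'n set" where
  "in_nbrs N L a = {c \<in> N. (c, a) \<in> L}"

definition out_nbrs :: "'n set \<Rightarrow> ('n \<times> 'n) set \<Rightarrow> 'n \<Rightarrow> 'n set" where
  "out_nbrs N L a = {c \<in> N. (a, c) \<in> L}"

definition dmax :: "'n set \<Rightarrow> ('n \<times> 'n) set \<Rightarrow> nat" where
  "dmax N L = Max ((\<lambda>a. max (card (in_nbrs N L a)) (card (out_nbrs N L a))) ` N)"

definition weight_b :: "(nat \<Rightarrow> 'n \<Rightarrow> 'n \<Rightarrow> real) \<Rightarrow> real \<Rightarrow> nat \<Rightarrow> 'n \<Rightarrow> 'n \<Rightarrow> 'n \<Rightarrow> real" where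
  "weight_b Q \<gamma> t a c b = max (Q t a b - Q t c b - \<gamma>) 0"

definition weight :: "'n set \<Rightarrow> (nat \<Rightarrow> 'n \<Rightarrow> 'n \<Rightarrow> real) \<Rightarrow> real \<Rightarrow> nat \<Rightarrow> 'n \<Rightarrow> 'n \<Rightarrow> real" where
  "weight N Q \<gamma> t a c = Max ((\<lambda>b. weight_b Q \<gamma> t a c b) ` N)"

end

theory Submission
  imports Defs
begin

text \<open>Both bounds are invariants of the dynamics. Routing uses a link only if the backlog gap
  across it exceeds \<open>\<gamma> = Rmax + dmax \<cdot> mumax\<close>, which bounds what a node can send in one slot and
  also what it can receive plus admit. Hence a sending queue stays nonnegative, and a receiving
  queue stays below the backlog of the neighbour it receives from. A queue receiving nothing grows
  only by admission, which stops once \<open>Q > \<beta> V\<close>, because a concave utility lies below its tangent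
  at 0, whose slope is at most \<open>\<beta>\<close>. The key store is refilled only below \<open>\<theta>\<close>, by at most
  \<open>Kmax\<close>, and never drained below zero.\<close>

lemma concave_on_Ici_le_tangent:
  fixes f :: "real \<Rightarrow> real"
  assumes concave: "concave_on {a..} f"
    and deriv: "(f has_real_derivative D) (at a within {a..})"
    and "a \<le> x"
  shows "f x \<le> f a + D * (x - a)"
proof (cases "x = a")
  case False
  with \<open>a \<le> x\<close> have "a < x" by simp
  have lim: "((\<lambda>y. (f y - f a) / (y - a)) \<longlongrightarrow> D) (at_right a)"
    using deriv unfolding has_field_derivative_iff at_within_Ici_at_right .
  have "eventually (\<lambda>y. (f x - f a) / (x - a) \<le> (f y - f a) / (y - a)) (at_right a)"
    using eventually_at_right_real[OF \<open>a < x\<close>]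
  proof (rule eventually_mono)
    fix y assume y: "y \<in> {a<..<x}"
    define s where "s = (y - a) / (x - a)"
    have s: "0 \<le> s" "s \<le> 1" "s * (x - a) = y - a"
      using y \<open>a < x\<close> by (auto simp: s_def)
    then have y_eq: "(1 - s) * a + s * x = y"
      by (simp add: algebra_simps)
    have "(1 - s) * f a + s * f x \<le> f y"
      using concave_onD[OF concave s(1,2), of a x] \<open>a \<le> x\<close> y_eq by simp
    moreover have "(y - a) * ((f x - f a) / (x - a)) = s * (f x - f a)"
      by (simp add: s_def)
    ultimately have "(y - a) * ((f x - f a) / (x - a)) \<le> f y - f a"
      by (simp add: algebra_simps)
    then show "(f x - f a) / (x - a) \<le> (f y - f a) / (y - a)"
      using y by (simp add: field_simps)
  qed
  then have "(f x - f a) / (x - a) \<le> D"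
    by (rule tendsto_lowerbound[OF lim]) simp
  then show ?thesis using \<open>a < x\<close> by (simp add: field_simps)
qed simp

lemma concave_mono_on_Ici_deriv_nonneg:
  fixes f :: "real \<Rightarrow> real"
  assumes "concave_on {a..} f" and "mono_on {a..} f"
    and "(f has_real_derivative D) (at a within {a..})"
  shows "0 \<le> D"
proof -
  have "f (a + 1) \<le> f a + D * (a + 1 - a)"
    using concave_on_Ici_le_tangent[OF assms(1,3), of "a + 1"] by simp
  moreover have "f a \<le> f (a + 1)"
    using mono_onD[OF assms(2)] by simp
  ultimately show ?thesis by simp
qed

lemma concave_penalized_maximizer_eq_0:
  fixes f :: "real \<Rightarrow> real"
  assumes concave: "concave_on {0..} f"
    and deriv: "(f has_real_derivative D) (at 0 within {0..})"
    and "0 < V" and "V * D < q" and "0 \<le> r"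
    and maximal: "V * f 0 \<le> V * f r - q * r"
  shows "r = 0"
proof -
  have "f r \<le> f 0 + D * r"
    using concave_on_Ici_le_tangent[OF concave deriv \<open>0 \<le> r\<close>] by simp
  then have "V * f r \<le> V * (f 0 + D * r)"
    using \<open>0 < V\<close> by (intro mult_left_mono) auto
  with maximal have "0 \<le> (V * D - q) * r"
    by (simp add: algebra_simps)
  with \<open>V * D < q\<close> \<open>0 \<le> r\<close> show ?thesis
    by (simp add: zero_le_mult_iff)
qed

lemma max_card_nbrs_le_dmax:
  "finite N \<Longrightarrow> a \<in> N \<Longrightarrow> max (card (in_nbrs N L a)) (card (out_nbrs N L a)) \<le> dmax N L"
  unfolding dmax_def by (rule Max_ge) auto

lemma card_in_nbrs_le_dmax: "finite N \<Longrightarrow> a \<in> N \<Longrightarrow> card (in_nbrs N L a) \<le> dmax N L"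
  using max_card_nbrs_le_dmax by fastforce

lemma card_out_nbrs_le_dmax: "finite N \<Longrightarrow> a \<in> N \<Longrightarrow> card (out_nbrs N L a) \<le> dmax N L"
  using max_card_nbrs_le_dmax by fastforce

locale backlog_dynamics =
  fixes N :: "'n set" and L :: "('n \<times> 'n) set"
    and Q R :: "nat \<Rightarrow> 'n \<Rightarrow> 'n \<Rightarrow> real" and \<mu> :: "nat \<Rightarrow> 'n \<Rightarrow> 'n \<Rightarrow> 'n \<Rightarrow> real"
    and Rmax mumax \<gamma> q :: real
  assumes finite_nodes: "finite N"
    and admitted_range: "\<And>t a b. a \<in> N \<Longrightarrow> b \<in> N \<Longrightarrow> 0 \<le> R t a b \<and> R t a b \<le> Rmax"
    and admission_off: "\<And>t a b. a \<in> N \<Longrightarrow> b \<in> N \<Longrightarrow> q < Q t a b \<Longrightarrow> R t a b = 0"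
    and rate_range: "\<And>t a c b. (a, c) \<in> L \<Longrightarrow> 0 \<le> \<mu> t a c b \<and> \<mu> t a c b \<le> mumax"
    and rate_active: "\<And>t a c b. (a, c) \<in> L \<Longrightarrow> \<mu> t a c b \<noteq> 0 \<Longrightarrow> \<gamma> < Q t a b - Q t c b"
    and gamma_eq: "\<gamma> = Rmax + real (dmax N L) * mumax"
    and backlog_step: "\<And>t a b. a \<in> N \<Longrightarrow> b \<in> N \<Longrightarrow>
      Q (Suc t) a b = Q t a b + R t a b
        + (\<Sum>c \<in> in_nbrs N L a. \<mu> t c a b) - (\<Sum>c \<in> out_nbrs N L a. \<mu> t a c b)"
begin

lemma in_flow_nonneg: "0 \<le> (\<Sum>c \<in> in_nbrs N L a. \<mu> t c a b)"
  by (intro sum_nonneg) (simp add: in_nbrs_def rate_range)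

lemma out_flow_nonneg: "0 \<le> (\<Sum>c \<in> out_nbrs N L a. \<mu> t a c b)"
  by (intro sum_nonneg) (simp add: out_nbrs_def rate_range)

lemma in_flow_le:
  assumes "a \<in> N" and "0 \<le> mumax"
  shows "(\<Sum>c \<in> in_nbrs N L a. \<mu> t c a b) \<le> \<gamma> - Rmax"
proof -
  have "(\<Sum>c \<in> in_nbrs N L a. \<mu> t c a b) \<le> real (card (in_nbrs N L a)) * mumax"
    by (intro sum_bounded_above) (simp add: in_nbrs_def rate_range)
  also have "\<dots> \<le> real (dmax N L) * mumax"
    using card_in_nbrs_le_dmax[OF finite_nodes \<open>a \<in> N\<close>] \<open>0 \<le> mumax\<close>
    by (intro mult_right_mono) auto
  finally show ?thesis by (simp add: gamma_eq)
qed

lemma out_flow_le: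
  assumes "a \<in> N" and "0 \<le> mumax"
  shows "(\<Sum>c \<in> out_nbrs N L a. \<mu> t a c b) \<le> \<gamma> - Rmax"
proof -
  have "(\<Sum>c \<in> out_nbrs N L a. \<mu> t a c b) \<le> real (card (out_nbrs N L a)) * mumax"
    by (intro sum_bounded_above) (simp add: out_nbrs_def rate_range)
  also have "\<dots> \<le> real (dmax N L) * mumax"
    using card_out_nbrs_le_dmax[OF finite_nodes \<open>a \<in> N\<close>] \<open>0 \<le> mumax\<close>
    by (intro mult_right_mono) auto
  finally show ?thesis by (simp add: gamma_eq)
qed

lemma backlog_step_nonneg:
  assumes a: "a \<in> N" and b: "b \<in> N" and nonneg: "\<And>c. c \<in> N \<Longrightarrow> 0 \<le> Q t c b"
  shows "0 \<le> Q (Suc t) a b"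
proof (cases "\<exists>c \<in> out_nbrs N L a. \<mu> t a c b \<noteq> 0")
  case True
  then obtain c where "(a, c) \<in> L" "c \<in> N" "\<mu> t a c b \<noteq> 0"
    by (auto simp: out_nbrs_def)
  then have "\<gamma> < Q t a b - Q t c b" and "0 \<le> mumax"
    using rate_active rate_range[of a c t b] by fastforce+
  then show ?thesis
    using backlog_step[OF a b, of t] out_flow_le[OF a, where t=t and b=b] in_flow_nonneg[where a=a and t=t and b=b]
      admitted_range[OF a b, of t] nonneg[OF \<open>c \<in> N\<close>]
    by linarith
next
  case False
  then have "(\<Sum>c \<in> out_nbrs N L a. \<mu> t a c b) = 0" by simp
  then show ?thesis
    using backlog_step[OF a b, of t] in_flow_nonneg[where a=a and t=t and b=b] admitted_range[OF a b, of t] nonneg[OF a]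
    by linarith
qed

lemma backlog_step_le:
  assumes a: "a \<in> N" and b: "b \<in> N" and bounded: "\<And>c. c \<in> N \<Longrightarrow> Q t c b \<le> q + Rmax"
  shows "Q (Suc t) a b \<le> q + Rmax"
proof (cases "\<exists>c \<in> in_nbrs N L a. \<mu> t c a b \<noteq> 0")
  case True
  then obtain c where "(c, a) \<in> L" "c \<in> N" "\<mu> t c a b \<noteq> 0"
    by (auto simp: in_nbrs_def)
  then have "\<gamma> < Q t c b - Q t a b" and "0 \<le> mumax"
    using rate_active rate_range[of c a t b] by fastforce+
  then show ?thesis
    using backlog_step[OF a b, of t] in_flow_le[OF a, where t=t and b=b] out_flow_nonneg[where a=a and t=t and b=b]
      admitted_range[OF a b, of t] bounded[OF \<open>c \<in> N\<close>]
    by linarith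
next
  case False
  then have "(\<Sum>c \<in> in_nbrs N L a. \<mu> t c a b) = 0" by simp
  moreover have "Q t a b + R t a b \<le> q + Rmax"
    using admission_off[OF a b, of t] admitted_range[OF a b, of t] bounded[OF a]
    by (cases "q < Q t a b") auto
  ultimately show ?thesis
    using backlog_step[OF a b, of t] out_flow_nonneg[where a=a and t=t and b=b] by linarith
qed

lemma backlog_bounded:
  assumes init: "\<And>a b. a \<in> N \<Longrightarrow> b \<in> N \<Longrightarrow> 0 \<le> Q 0 a b \<and> Q 0 a b \<le> q + Rmax"
  shows "a \<in> N \<Longrightarrow> b \<in> N \<Longrightarrow> 0 \<le> Q t a b \<and> Q t a b \<le> q + Rmax"
proof (induction t arbitrary: a)
  case (Suc t)
  then show ?case
    using backlog_step_nonneg backlog_step_le by blast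
qed (use init in blast)

end

lemma key_store_bounded:
  fixes E P S :: "nat \<Rightarrow> real"
  assumes "E 0 = 0" and "0 \<le> \<theta>" and "0 \<le> k" and "k \<le> Kmax"
    and consumed: "\<And>t. 0 \<le> P t \<and> P t \<le> E t"
    and switch: "\<And>t. S t = (if E t < \<theta> then 1 else 0)"
    and step: "\<And>t. E (Suc t) = E t - P t + S t * k"
  shows "0 \<le> E t \<and> E t \<le> \<theta> + Kmax"
proof (induction t)
  case (Suc t)
  then show ?case
    using step[of t] switch[of t] consumed[of t] assms(3,4) by (cases "E t < \<theta>") auto
qed (use assms(1-4) in simp)

theorem lemma1:
  fixes N :: "'n set" and L :: "('n \<times> 'n) set"
    and K :: "'n \<Rightarrow> 'n \<Rightarrow> real" and Kmax :: real
    and Pmax :: real and mumax :: real and \<delta> :: real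
    and muf :: "'n \<Rightarrow> 'n \<Rightarrow> real \<Rightarrow> real"
    and Rmax :: real and V :: real and \<beta> :: real
    and U :: "'n \<Rightarrow> 'n \<Rightarrow> real \<Rightarrow> real" and U' :: "'n \<Rightarrow> 'n \<Rightarrow> real"
    and \<gamma> :: real and \<theta> :: "'n \<Rightarrow> 'n \<Rightarrow> real"
    and Q :: "nat \<Rightarrow> 'n \<Rightarrow> 'n \<Rightarrow> real" and E :: "nat \<Rightarrow> 'n \<Rightarrow> 'n \<Rightarrow> real"
    and S :: "nat \<Rightarrow> 'n \<Rightarrow> 'n \<Rightarrow> real" and R :: "nat \<Rightarrow> 'n \<Rightarrow> 'n \<Rightarrow> real"
    and P :: "nat \<Rightarrow> 'n \<Rightarrow> 'n \<Rightarrow> real"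
    and bstar :: "nat \<Rightarrow> 'n \<Rightarrow> 'n \<Rightarrow> 'n"
    and mub :: "nat \<Rightarrow> 'n \<Rightarrow> 'n \<Rightarrow> 'n \<Rightarrow> real"
  assumes finN: "finite N" and LN: "L \<subseteq> N \<times> N"
    (* key generation *)
    and K_bnd: "\<And>a c. (a, c) \<in> L \<Longrightarrow> 0 \<le> K a c \<and> K a c \<le> Kmax"
    and Pmax_nn: "0 \<le> Pmax"
    (* transmission rate function *)
    and delta_pos: "\<delta> > 0"
    and mu_bnd: "\<And>a c p. (a, c) \<in> L \<Longrightarrow> 0 \<le> p \<Longrightarrow> p \<le> Pmax \<Longrightarrow>
                   0 \<le> muf a c p \<and> muf a c p \<le> mumax \<and> muf a c p \<le> \<delta> * p"
    (* utilities *)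
    and U_concave: "\<And>a b. a \<in> N \<Longrightarrow> b \<in> N \<Longrightarrow> concave_on {0..} (U a b)"
    and U_mono: "\<And>a b. a \<in> N \<Longrightarrow> b \<in> N \<Longrightarrow> mono_on {0..} (U a b)"
    and U_deriv: "\<And>a b. a \<in> N \<Longrightarrow> b \<in> N \<Longrightarrow>
                    (U a b has_real_derivative U' a b) (at 0 within {0..})"
    and beta_def: "\<beta> = Max {U' a b | a b. a \<in> N \<and> b \<in> N}"
    and V_pos: "V > 0"
    and gamma_def: "\<gamma> = Rmax + real (dmax N L) * mumax"
    and theta_def: "\<And>a c. \<theta> a c = \<delta> * \<beta> * V + Pmax"
    (* initial conditions *)
    and Q0: "\<And>a b. a \<in> N \<Longrightarrow> b \<in> N \<Longrightarrow> Q 0 a b = 0"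
    and E0: "\<And>a c. (a, c) \<in> L \<Longrightarrow> E 0 a c = 0"
    (* step (1): key generation on/off *)
    and S_rule: "\<And>t a c. (a, c) \<in> L \<Longrightarrow> S t a c = (if E t a c < \<theta> a c then 1 else 0)"
    (* step (2): admission control *)
    and R_feas: "\<And>t a b. a \<in> N \<Longrightarrow> b \<in> N \<Longrightarrow> 0 \<le> R t a b \<and> R t a b \<le> Rmax"
    and R_opt: "\<And>t a b r. a \<in> N \<Longrightarrow> b \<in> N \<Longrightarrow> 0 \<le> r \<Longrightarrow> r \<le> Rmax \<Longrightarrow>
                  V * U a b r - Q t a b * r \<le> V * U a b (R t a b) - Q t a b * R t a b"
    (* step (3): key consumption *)
    and P_feas: "\<And>t a c. (a, c) \<in> L \<Longrightarrow> 0 \<le> P t a c \<and> P t a c \<le> Pmax \<and> P t a c \<le> E t a c"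
    and P_opt: "\<And>t P'. (\<forall>(a, c) \<in> L. 0 \<le> P' a c \<and> P' a c \<le> Pmax \<and> P' a c \<le> E t a c) \<Longrightarrow>
                  (\<Sum>(a, c) \<in> L. muf a c (P' a c) * weight N Q \<gamma> t a c + (E t a c - \<theta> a c) * P' a c)
                  \<le> (\<Sum>(a, c) \<in> L. muf a c (P t a c) * weight N Q \<gamma> t a c + (E t a c - \<theta> a c) * P t a c)"
    (* step (4): routing *)
    and bstar_in: "\<And>t a c. (a, c) \<in> L \<Longrightarrow> bstar t a c \<in> N"
    and bstar_max: "\<And>t a c. (a, c) \<in> L \<Longrightarrow> weight_b Q \<gamma> t a c (bstar t a c) = weight N Q \<gamma> t a c"
    and mub_def: "\<And>t a c b. (a, c) \<in> L \<Longrightarrow>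
                    mub t a c b = (if b = bstar t a c \<and> weight_b Q \<gamma> t a c b > 0
                                   then muf a c (P t a c) else 0)"
    (* step (5): dynamics *)
    and E_step: "\<And>t a c. (a, c) \<in> L \<Longrightarrow> E (Suc t) a c = E t a c - P t a c + S t a c * K a c"
    and Q_step: "\<And>t a b. a \<in> N \<Longrightarrow> b \<in> N \<Longrightarrow>
                   Q (Suc t) a b = Q t a b + R t a b
                     + (\<Sum>c \<in> in_nbrs N L a. mub t c a b) - (\<Sum>c \<in> out_nbrs N L a. mub t a c b)"
  shows "(\<forall>t a b. a \<in> N \<longrightarrow> b \<in> N \<longrightarrow> 0 \<le> Q t a b \<and> Q t a b \<le> \<beta> * V + Rmax) \<and>
         (\<forall>t a c. (a, c) \<in> L \<longrightarrow> 0 \<le> E t a c \<and> E t a c \<le> \<theta> a c + Kmax)"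
proof -
  have slope: "0 \<le> U' a b \<and> U' a b \<le> \<beta>" if "a \<in> N" "b \<in> N" for a b
  proof
    show "0 \<le> U' a b"
      by (rule concave_mono_on_Ici_deriv_nonneg[OF U_concave U_mono U_deriv]) (use that in auto)
    have "finite {U' a b | a b. a \<in> N \<and> b \<in> N}"
      using finite_image_set2[of "\<lambda>a. a \<in> N" "\<lambda>b. b \<in> N"] finN by simp
    then show "U' a b \<le> \<beta>"
      unfolding beta_def using that by (intro Max_ge) auto
  qed
  have beta_nonneg: "0 \<le> \<beta>" if "a \<in> N" for a
    using slope[OF that that] by linarith
  have admission_off: "R t a b = 0" if ab: "a \<in> N" "b \<in> N" and "\<beta> * V < Q t a b" for t a b
  proof (rule concave_penalized_maximizer_eq_0[OF U_concave[OF ab] U_deriv[OF ab] V_pos])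
    have "V * U' a b \<le> V * \<beta>"
      using slope[OF ab] V_pos by (intro mult_left_mono) auto
    with \<open>\<beta> * V < Q t a b\<close> show "V * U' a b < Q t a b"
      by (simp add: mult.commute)
    show "0 \<le> R t a b" and "V * U a b 0 \<le> V * U a b (R t a b) - Q t a b * R t a b"
      using R_feas[OF ab, of t] R_opt[OF ab, of 0 t] by auto
  qed
  interpret backlog_dynamics N L Q R mub Rmax mumax \<gamma> "\<beta> * V"
  proof
    show "0 \<le> mub t a c b \<and> mub t a c b \<le> mumax" if "(a, c) \<in> L" for t a c b
    proof -
      have "0 \<le> mumax"
        using mu_bnd[OF that order_refl Pmax_nn] by linarith
      then show ?thesis
        using mub_def[OF that, of t b] mu_bnd[OF that, of "P t a c"] P_feas[OF that, of t] by auto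
    qed
    show "\<gamma> < Q t a b - Q t c b" if "(a, c) \<in> L" "mub t a c b \<noteq> 0" for t a c b
      using mub_def[OF that(1)] that(2) by (auto simp: weight_b_def split: if_splits)
  qed (use finN R_feas admission_off gamma_def Q_step in auto)
  have "0 \<le> Q t a b \<and> Q t a b \<le> \<beta> * V + Rmax" if "a \<in> N" "b \<in> N" for t a b
  proof (rule backlog_bounded[OF _ that])
    fix a b assume "a \<in> N" "b \<in> N"
    then show "0 \<le> Q 0 a b \<and> Q 0 a b \<le> \<beta> * V + Rmax"
      using Q0 R_feas[of a b 0] beta_nonneg V_pos by simp
  qed
  moreover have "0 \<le> E t a c \<and> E t a c \<le> \<theta> a c + Kmax" if ac: "(a, c) \<in> L" for t a c
  proof (rule key_store_bounded[where E = "\<lambda>t. E t a c" and P = "\<lambda>t. P t a c" and S = "\<lambda>t. S t a c"])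
    show "0 \<le> \<theta> a c"
      using theta_def beta_nonneg[of a] ac LN delta_pos V_pos Pmax_nn by auto
  qed (use E0[OF ac] K_bnd[OF ac] P_feas[OF ac] S_rule[OF ac] E_step[OF ac] in auto)
  ultimately show ?thesis by blast
qed

end
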